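(* Let $k$ be an algebraically closed field and $S\subset\mathbb{P}^3$ a smooth cubic surface. Let $\begin{pmatrix} a_1&\cdots&a_6\\ b_1&\cdots&b_6\end{pmatrix}$ be a Schläfli double-six of lines on $S$. For $i\neq j$ let $\pi_{ij}$ be a linear form defining the plane spanned by the intersecting lines $b_i$ and $a_j$, where the forms $\pi_{12},\pi_{23},\pi_{31},\pi_{13},\pi_{21},\pi_{32}$ are scaled so that $\pi_{12}\pi_{23}\pi_{31}+\pi_{13}\pi_{21}\pi_{32}$ is a defining polynomial of $S$ (such a scaling exists), so that $$\Re=\begin{pmatrix}0&\pi_{12}&\pi_{13}\\ \pi_{21}&0&\pi_{23}\\ \pi_{31}&\pi_{32}&0\end{pmatrix}$$ is a determinantal representation of $S$. Then the set of six skew lines corresponding to $\Re$ is $\{a_1,\dots,a_6\}$ and the set of six skew lines corresponding to $\Re^t$ is $\{b_1,\dots,b_6\}$; that is, the two sets together form the double-six $\begin{pmatrix} a_1&\cdots&a_6\\ b_1&\cdots&b_6\end{pmatrix}$.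
   Context: A Schläfli double-six on $S$ is a set of twelve lines $a_1,\dots,a_6,b_1,\dots,b_6$ on $S$ such that the $a_i$ are mutually skew, the $b_j$ are mutually skew, and $a_i$ meets $b_j$ if and only if $i\neq j$. A determinantal representation of $S$ (defined by a cubic form $F$) is a $3\times 3$ matrix of linear forms $M=z_0M_0+\dots+z_3M_3$ with $\det M=cF$, $c\in k\setminus\{0\}$. For a point $P=(\zeta,\eta,\xi)\in\mathbb{P}^2$, the three entries of $M\cdot(\zeta,\eta,\xi)^t$ are linear forms on $\mathbb{P}^3$; there are exactly six points $P$ for which the three planes so defined intersect in a line, and the six resulting lines lie on $S$ and are mutually skew; they are called the six skew lines corresponding to $M$. *)

theory Defs
  imports "HOL-Analysis.Finite_Cartesian_Product" "HOL-Computational_Algebra.Polynomial"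
begin

text \<open>Projective 3-space over k is modelled via k^4: points are nonzero vectors,
  projective subspaces are linear subspaces (cones) of k^4.\<close>

definition lform :: "'a::field ^ 4 \<Rightarrow> 'a ^ 4 \<Rightarrow> 'a" where
  "lform l x = (\<Sum>i\<in>UNIV. l $ i * x $ i)"

definition cubic_eval :: "(4 \<Rightarrow> 4 \<Rightarrow> 4 \<Rightarrow> 'a::field) \<Rightarrow> 'a ^ 4 \<Rightarrow> 'a" where
  "cubic_eval c x = (\<Sum>i\<in>UNIV. \<Sum>j\<in>UNIV. \<Sum>l\<in>UNIV. c i j l * x $ i * x $ j * x $ l)"

definition cubic_deriv :: "(4 \<Rightarrow> 4 \<Rightarrow> 4 \<Rightarrow> 'a::field) \<Rightarrow> 4 \<Rightarrow> 'a ^ 4 \<Rightarrow> 'a" where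
  "cubic_deriv c m x = (\<Sum>i\<in>UNIV. \<Sum>j\<in>UNIV. \<Sum>l\<in>UNIV. c i j l *
      ((if i = m then 1 else 0) * x $ j * x $ l
     + x $ i * (if j = m then 1 else 0) * x $ l
     + x $ i * x $ j * (if l = m then 1 else 0)))"

definition smooth_cubic :: "(4 \<Rightarrow> 4 \<Rightarrow> 4 \<Rightarrow> 'a::field) \<Rightarrow> bool" where
  "smooth_cubic c \<longleftrightarrow>
     \<not> (\<exists>x. x \<noteq> 0 \<and> cubic_eval c x = 0 \<and> (\<forall>m. cubic_deriv c m x = 0))"

definition proj_line :: "('a::field ^ 4) set \<Rightarrow> bool" where
  "proj_line L \<longleftrightarrow> (\<exists>u v. (\<forall>s t. s *s u + t *s v = 0 \<longrightarrow> s = 0 \<and> t = 0)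
                          \<and> L = {s *s u + t *s v | s t. True})"

definition line_on_surface :: "(4 \<Rightarrow> 4 \<Rightarrow> 4 \<Rightarrow> 'a::field) \<Rightarrow> ('a ^ 4) set \<Rightarrow> bool" where
  "line_on_surface c L \<longleftrightarrow> proj_line L \<and> (\<forall>x\<in>L. cubic_eval c x = 0)"

definition skew :: "('a::field ^ 4) set \<Rightarrow> ('a ^ 4) set \<Rightarrow> bool" where
  "skew L M \<longleftrightarrow> L \<inter> M = {0}"

definition meets :: "('a::field ^ 4) set \<Rightarrow> ('a ^ 4) set \<Rightarrow> bool" where
  "meets L M \<longleftrightarrow> L \<inter> M \<noteq> {0}"

definition double_six ::
  "(4 \<Rightarrow> 4 \<Rightarrow> 4 \<Rightarrow> 'a::field) \<Rightarrow> (nat \<Rightarrow> ('a ^ 4) set) \<Rightarrow> (nat \<Rightarrow> ('a ^ 4) set) \<Rightarrow> bool" where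
  "double_six c a b \<longleftrightarrow>
     (\<forall>i\<in>{1..6}. line_on_surface c (a i) \<and> line_on_surface c (b i)) \<and>
     (\<forall>i\<in>{1..6}. \<forall>j\<in>{1..6}. i \<noteq> j \<longrightarrow> skew (a i) (a j)) \<and>
     (\<forall>i\<in>{1..6}. \<forall>j\<in>{1..6}. i \<noteq> j \<longrightarrow> skew (b i) (b j)) \<and>
     (\<forall>i\<in>{1..6}. \<forall>j\<in>{1..6}. meets (a i) (b j) \<longleftrightarrow> i \<noteq> j)"

definition span2 :: "('a::field ^ 4) set \<Rightarrow> ('a ^ 4) set \<Rightarrow> ('a ^ 4) set" where
  "span2 L M = {u + v | u v. u \<in> L \<and> v \<in> M}"

text \<open>A 3x3 matrix of linear forms, rows and columns indexed by 1,2,3.\<close>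
type_synonym 'a lmatrix = "nat \<Rightarrow> nat \<Rightarrow> 'a ^ 4"

definition lmat_transpose :: "'a lmatrix \<Rightarrow> 'a lmatrix" where
  "lmat_transpose M = (\<lambda>r s. M s r)"

definition planes_locus :: "'a::field lmatrix \<Rightarrow> (nat \<Rightarrow> 'a) \<Rightarrow> ('a ^ 4) set" where
  "planes_locus M p = {x. \<forall>r\<in>{1,2,3}. lform (\<Sum>s\<in>{1,2,3}. p s *s M r s) x = 0}"

definition skew_lines_of :: "'a::field lmatrix \<Rightarrow> ('a ^ 4) set set" where
  "skew_lines_of M = {L. proj_line L \<and>
      (\<exists>p. (\<exists>s\<in>{1,2,3}. p s \<noteq> 0) \<and> L = planes_locus M p)}"

end

theory Submission
  imports Defs "HOL-Analysis.Cartesian_Space"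
begin

(* For p = e_s the rows of R p cut out two planes through a_s, so the locus is a_s.  For j >= 4,
   reading off p at a general point z of a_j makes every row of R p vanish at z and at the point
   where a_j meets the corresponding b_r, so the locus contains a_j and hence equals it.
   Conversely, let the locus L of p be a line.  If exactly two entries p_s, p_t are nonzero,
   L lies in the planes pi_st and pi_ts and meets a_s and a_t in points of b_r, so L = b_r,
   which is not contained in pi_st.  If all entries are nonzero, the scaling identity puts L on S,
   and L meets b_1, b_2, b_3.  Were L none of a_4, a_5, a_6, these four lines would sweep out the
   quadric through b_1, b_2, b_3 and force it into S; then S would be singular at the point where
   a_1 meets b_2, since its tangent plane would contain the plane of a_1 and b_2 and the line of
   the other ruling through that point.  The statement for R^t is the same statement for the
   double-six with a and b exchanged. *)

section \<open>Planes and lines in projective 3-space\<close>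

definition plane :: "'a::field ^ 4 \<Rightarrow> ('a ^ 4) set" where
  "plane f = {x. lform f x = 0}"

lemma lform_add [simp]: "lform f (x + y) = lform f x + lform f y"
  by (simp add: lform_def sum.distrib algebra_simps)

lemma lform_scale [simp]: "lform f (k *s x) = k * lform f x"
  by (simp add: lform_def sum_distrib_left algebra_simps)

lemma lform_diff [simp]: "lform f (x - y) = lform f x - lform f y"
  by (simp add: lform_def sum_subtractf algebra_simps)

lemma lform_zero [simp]: "lform f 0 = 0" "lform 0 x = 0"
  by (simp_all add: lform_def)

lemma lform_add_form [simp]: "lform (f + g) x = lform f x + lform g x"
  by (simp add: lform_def sum.distrib algebra_simps)

lemma lform_scale_form [simp]: "lform (k *s f) x = k * lform f x"
  by (simp add: lform_def sum_distrib_left algebra_simps)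

lemma lform_diff_form [simp]: "lform (f - g) x = lform f x - lform g x"
  by (simp add: lform_def sum_subtractf algebra_simps)

lemma lform_axis: "lform f (axis i 1) = f $ i"
  by (simp add: lform_def axis_def if_distrib cong: if_cong)

lemma subspace_plane: "vec.subspace (plane f)"
  by (auto simp: vec.subspace_def plane_def)

lemma dim_UNIV_vec4: "vec.dim (UNIV :: ('a::field ^ 4) set) = 4"
  by (simp add: card_cart_basis)

lemma dim_plane:
  assumes "f \<noteq> 0" shows "vec.dim (plane f) = 3"
proof -
  obtain i where "f $ i \<noteq> 0" using assms by (metis vec_eq_iff zero_index)
  define v where "v = axis i (1::'a)"
  have v: "lform f v \<noteq> 0" using \<open>f $ i \<noteq> 0\<close> by (simp add: v_def lform_axis)
  have "x \<in> {x + y |x y. x \<in> plane f \<and> y \<in> vec.span {v}}" for x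
  proof -
    let ?y = "(lform f x / lform f v) *s v"
    have "x - ?y \<in> plane f" "?y \<in> vec.span {v}"
      using v by (auto simp: plane_def vec.span_singleton)
    then show ?thesis
      unfolding mem_Collect_eq by (intro exI[of _ "x - ?y"] exI[of _ ?y]) simp
  qed
  then have "{x + y |x y. x \<in> plane f \<and> y \<in> vec.span {v}} = UNIV" by blast
  moreover have "plane f \<inter> vec.span {v} = {0}"
    using v by (auto simp: vec.span_singleton plane_def)
  moreover have "vec.dim (vec.span {v}) = 1"
    using v by (cases "v = 0") (auto simp: vec.dim_span_eq_card_independent vec.independent_insert)
  ultimately show ?thesis
    using vec.dim_sums_Int[OF subspace_plane vec.subspace_span, of f "{v}"] dim_UNIV_vec4[where 'a='a]
    by simp
qed

definition indep2 :: "'a::field ^ 4 \<Rightarrow> 'a ^ 4 \<Rightarrow> bool" where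
  "indep2 u v \<longleftrightarrow> (\<forall>s t. s *s u + t *s v = 0 \<longrightarrow> s = 0 \<and> t = 0)"

lemma span_pair_eq: "vec.span {u, v} = {s *s u + t *s v | s t. True}"
  by (auto simp: vec.span_insert vec.span_singleton)
    (metis add_diff_cancel_left' diff_add_cancel, metis add_diff_cancel_left')

lemma indep2_nonzero:
  assumes "indep2 u v" shows "u \<noteq> 0" "v \<noteq> 0"
  using assms[unfolded indep2_def, rule_format, of 1 0] assms[unfolded indep2_def, rule_format, of 0 1]
  by auto

lemma indep2_imp_independent:
  assumes "indep2 u v" shows "vec.independent {u, v}" "u \<noteq> v"
proof -
  have "u \<notin> vec.span {v}"
  proof
    assume "u \<in> vec.span {v}"
    then obtain k where "u = k *s v" by (auto simp: vec.span_singleton)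
    then have "1 *s u + (- k) *s v = 0" by simp
    then show False using assms unfolding indep2_def by fastforce
  qed
  then show "vec.independent {u, v}" "u \<noteq> v"
    using indep2_nonzero[OF assms] by (auto simp: vec.independent_insert vec.span_base)
qed

lemma indep2_if_separated:
  assumes "y \<noteq> 0" "lform f y = 0" "lform f z \<noteq> 0"
  shows "indep2 y z"
  unfolding indep2_def
proof (intro allI impI)
  fix s t assume st: "s *s y + t *s z = 0"
  then have "lform f (s *s y + t *s z) = 0" by simp
  then have "t = 0" using assms by simp
  then show "s = 0 \<and> t = 0" using st assms(1) by simp
qed

lemma not_indep2_imp_multiple:
  assumes "\<not> indep2 x y" "y \<noteq> 0" shows "\<exists>k. x = k *s y"
proof -
  obtain s t where st: "s *s x + t *s y = 0" "s \<noteq> 0 \<or> t \<noteq> 0"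
    using assms(1) unfolding indep2_def by blast
  with assms(2) have "s \<noteq> 0" by auto
  from st(1) have "x = (- t / s) *s y"
    using \<open>s \<noteq> 0\<close> by (simp add: vec_eq_iff field_simps add_eq_0_iff2)
  then show ?thesis by blast
qed

lemma proj_line_iff_span: "proj_line L \<longleftrightarrow> (\<exists>u v. indep2 u v \<and> L = vec.span {u, v})"
  unfolding proj_line_def indep2_def span_pair_eq by auto

lemma proj_line_subspace: "proj_line L \<Longrightarrow> vec.subspace L"
  unfolding proj_line_iff_span by auto

lemma proj_line_dim:
  assumes "proj_line L" shows "vec.dim L = 2"
proof -
  obtain u v where "indep2 u v" "L = vec.span {u, v}"
    using assms proj_line_iff_span by blast
  then show ?thesis
    using indep2_imp_independent[OF \<open>indep2 u v\<close>] by (simp add: vec.dim_eq_card_independent)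
qed

lemma proj_line_zero: "proj_line L \<Longrightarrow> 0 \<in> L"
  using proj_line_subspace vec.subspace_0 by blast

lemma proj_line_lincomb: "proj_line L \<Longrightarrow> x \<in> L \<Longrightarrow> y \<in> L \<Longrightarrow> s *s x + t *s y \<in> L"
  using proj_line_subspace vec.subspace_add vec.subspace_scale by blast

lemma proj_line_nonzero: "proj_line L \<Longrightarrow> \<exists>x\<in>L. x \<noteq> 0"
  unfolding proj_line_iff_span using indep2_nonzero vec.span_base by blast

lemma proj_line_eq_pencil:
  assumes "proj_line L" "y \<in> L" "z \<in> L" "indep2 y z"
  shows "L = {s *s y + t *s z | s t. True}"
proof -
  have "vec.span {y, z} = L"
  proof (rule vec.subspace_dim_equal)
    show "vec.span {y, z} \<subseteq> L"
      using assms by (intro vec.span_minimal) (auto simp: proj_line_subspace)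
    show "vec.dim L \<le> vec.dim (vec.span {y, z})"
      using assms indep2_imp_independent[OF assms(4)]
      by (simp add: proj_line_dim vec.dim_eq_card_independent)
  qed (use assms in \<open>auto simp: proj_line_subspace\<close>)
  then show ?thesis by (simp add: span_pair_eq)
qed

lemma proj_line_subset_plane:
  assumes "proj_line L" "y \<in> L" "z \<in> L" "indep2 y z" "y \<in> plane f" "z \<in> plane f"
  shows "L \<subseteq> plane f"
proof -
  have "L = {s *s y + t *s z | s t. True}" by (rule proj_line_eq_pencil[OF assms(1-4)])
  then show ?thesis using assms(5,6) by (auto simp: plane_def)
qed

lemma dim_sum_proj_lines:
  assumes "proj_line L" "proj_line M"
  shows "vec.dim {x + y |x y. x \<in> L \<and> y \<in> M} + vec.dim (L \<inter> M) = 4"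
proof -
  have "vec.dim {x + y |x y. x \<in> L \<and> y \<in> M} + vec.dim (L \<inter> M) = vec.dim L + vec.dim M"
    by (rule vec.dim_sums_Int) (simp_all add: assms proj_line_subspace)
  then show ?thesis unfolding proj_line_dim[OF assms(1)] proj_line_dim[OF assms(2)] by simp
qed

lemma coplanar_proj_lines_meet:
  assumes "proj_line L" "proj_line M" "f \<noteq> 0" "L \<subseteq> plane f" "M \<subseteq> plane f"
  shows "\<exists>x. x \<noteq> 0 \<and> x \<in> L \<and> x \<in> M"
proof (rule ccontr)
  assume "\<not> ?thesis"
  then have "L \<inter> M \<subseteq> {0}" by blast
  then have "vec.dim (L \<inter> M) = 0" by simp
  moreover have "{x + y |x y. x \<in> L \<and> y \<in> M} \<subseteq> plane f"
  proof safe
    fix x y assume "x \<in> L" "y \<in> M"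
    then have "x \<in> plane f" "y \<in> plane f" using assms(4,5) by auto
    then show "x + y \<in> plane f" by (simp add: plane_def)
  qed
  then have "vec.dim {x + y |x y. x \<in> L \<and> y \<in> M} \<le> 3"
    using vec.dim_subset[of _ "plane f"] dim_plane[OF assms(3)] by simp
  ultimately show False using dim_sum_proj_lines[OF assms(1,2)] by linarith
qed

lemma skew_proj_lines_sum_UNIV:
  assumes "proj_line L" "proj_line M" "L \<inter> M = {0}"
  shows "\<exists>y z. y \<in> L \<and> z \<in> M \<and> x = y + z"
proof -
  let ?S = "{x + y |x y. x \<in> L \<and> y \<in> M}"
  have "vec.dim (L \<inter> M) = 0" using assms(3) by simp
  then have "vec.dim (UNIV :: ('a ^ 4) set) \<le> vec.dim ?S"
    using dim_sum_proj_lines[OF assms(1,2)] unfolding dim_UNIV_vec4 by linarith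
  then have "?S = UNIV"
    by (intro vec.subspace_dim_equal) (auto intro: vec.subspace_sums simp: assms proj_line_subspace)
  then show ?thesis by blast
qed

lemma plane_Int_plane_subset:
  assumes "f \<noteq> 0" "g \<noteq> 0" "plane f \<noteq> plane g" "proj_line L" "L \<subseteq> plane f" "L \<subseteq> plane g"
  shows "plane f \<inter> plane g \<subseteq> L"
proof -
  let ?S = "{x + y |x y. x \<in> plane f \<and> y \<in> plane g}"
  have S: "vec.subspace ?S" by (intro vec.subspace_sums subspace_plane)
  have fS: "plane f \<subseteq> ?S"
  proof
    fix x assume "x \<in> plane f"
    then show "x \<in> ?S" unfolding mem_Collect_eq
      by (intro exI[of _ x] exI[of _ 0]) (simp add: plane_def)
  qed
  have gS: "plane g \<subseteq> ?S"
  proof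
    fix x assume "x \<in> plane g"
    then show "x \<in> ?S" unfolding mem_Collect_eq
      by (intro exI[of _ 0] exI[of _ x]) (simp add: plane_def)
  qed
  have "\<not> vec.dim ?S \<le> 3"
  proof
    assume le: "vec.dim ?S \<le> 3"
    have "plane f = ?S"
      by (rule vec.subspace_dim_equal[OF subspace_plane S fS]) (use le assms(1) in \<open>simp add: dim_plane\<close>)
    moreover have "plane g = ?S"
      by (rule vec.subspace_dim_equal[OF subspace_plane S gS]) (use le assms(2) in \<open>simp add: dim_plane\<close>)
    ultimately show False using assms(3) by metis
  qed
  moreover have "vec.dim ?S + vec.dim (plane f \<inter> plane g) = vec.dim (plane f) + vec.dim (plane g)"
    by (rule vec.dim_sums_Int) (simp_all add: subspace_plane)
  ultimately have "vec.dim (plane f \<inter> plane g) \<le> vec.dim L"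
    unfolding dim_plane[OF assms(1)] dim_plane[OF assms(2)] proj_line_dim[OF assms(4)] by linarith
  then have "L = plane f \<inter> plane g"
    using assms by (intro vec.subspace_dim_equal)
      (auto simp: proj_line_subspace vec.subspace_inter subspace_plane)
  then show ?thesis by simp
qed

lemma proj_line_meets_plane:
  assumes "proj_line L" shows "\<exists>x\<in>L. x \<noteq> 0 \<and> lform f x = 0"
proof -
  obtain u v where uv: "indep2 u v" "L = {s *s u + t *s v | s t. True}"
    using assms unfolding proj_line_def indep2_def by blast
  let ?x = "lform f v *s u + (- lform f u) *s v"
  show ?thesis
  proof (cases "?x = 0")
    case True
    then have "lform f v = 0 \<and> - lform f u = 0" using uv(1) unfolding indep2_def by blast
    then have "lform f u = 0" by simp
    moreover have "u \<in> L" using uv(2) by (force intro: exI[of _ 1] exI[of _ 0])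
    ultimately show ?thesis using indep2_nonzero[OF uv(1)] by blast
  next
    case False
    moreover have "?x \<in> L" using uv(2) by blast
    ultimately show ?thesis by (intro bexI[of _ ?x]) simp_all
  qed
qed

lemma proj_line_avoids_planes:
  assumes "infinite (UNIV :: 'a::field set)" "proj_line (L :: ('a ^ 4) set)"
    and "finite G" "\<And>f. f \<in> G \<Longrightarrow> \<not> L \<subseteq> plane f"
  shows "\<exists>z\<in>L. \<forall>f\<in>G. lform f z \<noteq> 0"
proof -
  obtain u v where uv: "indep2 u v" "L = {s *s u + t *s v | s t. True}"
    using assms(2) unfolding proj_line_def indep2_def by blast
  define bad where "bad f = {t. lform f u + t * lform f v = 0}" for f
  have "finite (bad f)" if "f \<in> G" for f
  proof (cases "lform f v = 0")
    case True
    then have "lform f u \<noteq> 0"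
      using assms(4)[OF that] uv(2) by (auto simp: plane_def)
    with True show ?thesis by (simp add: bad_def)
  next
    case False
    then have "bad f \<subseteq> {- lform f u / lform f v}"
      by (auto simp: bad_def field_simps eq_neg_iff_add_eq_0)
    then show ?thesis using finite_subset by blast
  qed
  then have "finite (\<Union>f\<in>G. bad f)" using assms(3) by blast
  then obtain t where "t \<notin> (\<Union>f\<in>G. bad f)"
    using assms(1) by (metis UNIV_I ex_new_if_finite)
  moreover have "1 *s u + t *s v \<in> L" using uv(2) by blast
  ultimately show ?thesis by (intro bexI[of _ "1 *s u + t *s v"]) (auto simp: bad_def)
qed

lemma span2_commute: "span2 L M = span2 M L"
  unfolding span2_def by (metis (no_types, lifting) add.commute)

lemma proj_lines_eq_if_indep2_common:
  assumes "proj_line L" "proj_line M" "y \<in> L" "z \<in> L" "y \<in> M" "z \<in> M" "indep2 y z"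
  shows "L = M"
  using proj_line_eq_pencil[OF assms(1,3,4,7)] proj_line_eq_pencil[OF assms(2,5,6,7)] by simp

section \<open>Cubic forms and their polars\<close>

lemma infinite_UNIV_alg_closed: "infinite (UNIV :: 'a::alg_closed_field set)"
proof
  assume fin: "finite (UNIV :: 'a set)"
  define q :: "'a poly" where "q = (\<Prod>x\<in>UNIV. [:-x, 1:])"
  have "degree q = card (UNIV :: 'a set)"
    unfolding q_def by (subst degree_prod_sum_eq) auto
  moreover have "card (UNIV :: 'a set) > 0" using fin by (simp add: card_gt_0_iff)
  ultimately have "degree (q + 1) > 0" by (subst degree_add_eq_left) simp_all
  then obtain y where "poly (q + 1) y = 0" using alg_closed_imp_poly_has_root by blast
  moreover have "poly q y = 0"
    unfolding q_def poly_prod using fin by (intro prod_zero bexI[of _ y]) auto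
  ultimately show False by simp
qed

lemma cubic_poly_eq_0:
  fixes k0 k1 k2 k3 :: "'a::field"
  assumes "infinite (UNIV :: 'a set)" "\<And>t. k0 + k1 * t + k2 * t^2 + k3 * t^3 = 0"
  shows "k0 = 0 \<and> k1 = 0 \<and> k2 = 0 \<and> k3 = 0"
proof -
  let ?p = "[:k0, k1, k2, k3:]"
  have "poly ?p t = 0" for t
    using assms(2)[of t] by (simp add: algebra_simps power2_eq_square power3_eq_cube)
  then have "{t. poly ?p t = 0} = UNIV" by blast
  then have "?p = 0" using poly_roots_finite[of ?p] assms(1) by auto
  then show ?thesis by simp
qed

lemma card_le_degree_if_roots:
  fixes p :: "'a::idom poly"
  assumes "p \<noteq> 0" "inj_on f J" "\<And>i. i \<in> J \<Longrightarrow> poly p (f i) = 0"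
  shows "card J \<le> degree p"
proof -
  have "f ` J \<subseteq> {x. poly p x = 0}" using assms(3) by blast
  then have "card (f ` J) \<le> card {x. poly p x = 0}"
    by (rule card_mono[OF poly_roots_finite[OF assms(1)]])
  then show ?thesis
    using card_poly_roots_bound[OF assms(1)] card_image[OF assms(2)] by linarith
qed

text \<open>Dehomogenise at the points with \<open>s i \<noteq> 0\<close>; at most one point has \<open>s i = 0\<close>,
  and it kills the leading coefficient.\<close>

lemma binary_cubic_eq_0:
  fixes s t :: "nat \<Rightarrow> 'a::field"
  assumes I: "finite I" "card I = 4"
    and np: "\<And>i j. i \<in> I \<Longrightarrow> j \<in> I \<Longrightarrow> i \<noteq> j \<Longrightarrow> s i * t j \<noteq> s j * t i"
    and z: "\<And>i. i \<in> I \<Longrightarrow> k0 * s i^3 + k1 * s i^2 * t i + k2 * s i * t i^2 + k3 * t i^3 = 0"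
  shows "k0 = 0 \<and> k1 = 0 \<and> k2 = 0 \<and> k3 = 0"
proof -
  let ?p = "[:k0, k1, k2, k3:]"
  define J where "J = {i\<in>I. s i \<noteq> 0}"
  define Z where "Z = {i\<in>I. s i = 0}"
  have JZ: "finite J" "finite Z" "J \<inter> Z = {}" "I = J \<union> Z" using I(1) by (auto simp: J_def Z_def)
  have card_JZ: "card J + card Z = 4" using card_Un_disjoint[OF JZ(1-3)] JZ(4) I(2) by simp
  have "card Z \<le> 1"
  proof (rule ccontr)
    assume "\<not> card Z \<le> 1"
    then obtain i j where "i \<in> Z" "j \<in> Z" "i \<noteq> j"
      by (metis One_nat_def card_le_Suc0_iff_eq JZ(2))
    then show False using np[of i j] by (auto simp: Z_def)
  qed
  have inj: "inj_on (\<lambda>i. t i / s i) J"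
  proof (rule inj_onI)
    fix i j assume "i \<in> J" "j \<in> J" "t i / s i = t j / s j"
    then show "i = j" using np[of i j] by (auto simp: J_def field_simps)
  qed
  have roots: "poly ?p (t i / s i) = 0" if "i \<in> J" for i
  proof -
    from that have "s i \<noteq> 0" "i \<in> I" by (auto simp: J_def)
    have "s i ^ 3 * poly ?p (t i / s i) = k0 * s i^3 + k1 * s i^2 * t i + k2 * s i * t i^2 + k3 * t i^3"
      using \<open>s i \<noteq> 0\<close> by (simp add: field_simps power2_eq_square power3_eq_cube)
    then show ?thesis using z[OF \<open>i \<in> I\<close>] \<open>s i \<noteq> 0\<close> by simp
  qed
  have "?p = 0"
  proof (rule ccontr)
    assume p0: "?p \<noteq> 0"
    have "card J \<le> degree ?p" by (rule card_le_degree_if_roots[OF p0 inj roots])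
    moreover have "degree ?p \<le> 3" by (simp add: degree_pCons_le)
    ultimately have "card J = 3" "card Z = 1" using card_JZ \<open>card Z \<le> 1\<close> by linarith+
    obtain m where m: "Z = {m}" using card_1_singletonE[OF \<open>card Z = 1\<close>] .
    obtain j where j: "j \<in> J" using \<open>card J = 3\<close> by fastforce
    have "m \<in> I" "s m = 0" using m by (auto simp: Z_def)
    moreover have "j \<in> I" "s j \<noteq> 0" using j by (auto simp: J_def)
    ultimately have "t m \<noteq> 0" using np[of j m] by auto
    then have "k3 = 0" using z[OF \<open>m \<in> I\<close>] \<open>s m = 0\<close> by simp
    then have "degree ?p \<le> 2" by (simp add: degree_pCons_le)
    then show False using \<open>card J \<le> degree ?p\<close> \<open>card J = 3\<close> by simp
  qed
  then show ?thesis by simp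
qed

definition cubic_polar :: "(4 \<Rightarrow> 4 \<Rightarrow> 4 \<Rightarrow> 'a::field) \<Rightarrow> 'a ^ 4 \<Rightarrow> 'a ^ 4 \<Rightarrow> 'a" where
  "cubic_polar c x e = (\<Sum>m\<in>UNIV. e $ m * cubic_deriv c m x)"

lemma cubic_polar_add: "cubic_polar c x (d + e) = cubic_polar c x d + cubic_polar c x e"
  unfolding cubic_polar_def by (simp add: sum.distrib algebra_simps)

lemma cubic_polar_scale: "cubic_polar c x (k *s e) = k * cubic_polar c x e"
  unfolding cubic_polar_def by (simp add: sum_distrib_left algebra_simps)

lemma cubic_polar_axis: "cubic_polar c x (axis m 1) = cubic_deriv c m x"
proof -
  have "cubic_polar c x (axis m 1) = (\<Sum>m'\<in>UNIV. if m' = m then cubic_deriv c m' x else 0)"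
    unfolding cubic_polar_def by (intro sum.cong) (auto simp: axis_def)
  then show ?thesis by simp
qed

lemma cubic_polar_expand:
  "cubic_polar c x e = (\<Sum>i\<in>UNIV. \<Sum>j\<in>UNIV. \<Sum>l\<in>UNIV. c i j l *
      (e$i * x$j * x$l + x$i * e$j * x$l + x$i * x$j * e$l))"
proof -
  have "cubic_polar c x e = (\<Sum>i\<in>UNIV. \<Sum>j\<in>UNIV. \<Sum>l\<in>UNIV. \<Sum>m\<in>UNIV.
      (if i = m then c i j l * e $ m * x $ j * x $ l else 0)
    + (if j = m then c i j l * x $ i * e $ m * x $ l else 0)
    + (if l = m then c i j l * x $ i * x $ j * e $ m else 0))"
    unfolding cubic_polar_def cubic_deriv_def sum_distrib_left
    by (subst sum.swap, rule sum.cong[OF refl], subst sum.swap, rule sum.cong[OF refl],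
        subst sum.swap, intro sum.cong refl) (simp add: algebra_simps)
  also have "\<dots> = (\<Sum>i\<in>UNIV. \<Sum>j\<in>UNIV. \<Sum>l\<in>UNIV. c i j l *
      (e$i * x$j * x$l + x$i * e$j * x$l + x$i * x$j * e$l))"
    by (simp add: sum.distrib algebra_simps)
  finally show ?thesis .
qed

lemma cubic_eval_lincomb:
  "cubic_eval c (s *s x + t *s y) = s^3 * cubic_eval c x + s^2 * t * cubic_polar c x y
      + s * t^2 * cubic_polar c y x + t^3 * cubic_eval c y"
proof -
  have "c i j l * ((s *s x + t *s y) $ i) * ((s *s x + t *s y) $ j) * ((s *s x + t *s y) $ l)
    = s^3 * (c i j l * x $ i * x $ j * x $ l)
    + s^2 * t * (c i j l * (y$i * x$j * x$l + x$i * y$j * x$l + x$i * x$j * y$l))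
    + s * t^2 * (c i j l * (x$i * y$j * y$l + y$i * x$j * y$l + y$i * y$j * x$l))
    + t^3 * (c i j l * y $ i * y $ j * y $ l)" for i j l
    by (simp add: algebra_simps power2_eq_square power3_eq_cube)
  then show ?thesis
    unfolding cubic_eval_def cubic_polar_expand
    by (simp add: sum.distrib sum_distrib_left algebra_simps)
qed

lemma cubic_polar_eq_0_if_line_on_surface:
  assumes "infinite (UNIV :: 'a::field set)" "\<And>t. cubic_eval c (x + t *s e) = (0::'a)"
  shows "cubic_polar c x e = 0"
proof -
  have "cubic_eval c x + cubic_polar c x e * t + cubic_polar c e x * t^2 + cubic_eval c e * t^3 = 0"
    for t
    using assms(2)[of t] cubic_eval_lincomb[of c 1 x t e] by (simp add: algebra_simps)
  then show ?thesis using cubic_poly_eq_0[OF assms(1)] by blast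
qed

lemma cubic_vanishes_on_pencil:
  fixes s t :: "nat \<Rightarrow> 'a::field"
  assumes "finite I" "card I = 4"
    and "\<And>i j. i \<in> I \<Longrightarrow> j \<in> I \<Longrightarrow> i \<noteq> j \<Longrightarrow> s i * t j \<noteq> s j * t i"
    and "\<And>i. i \<in> I \<Longrightarrow> cubic_eval c (s i *s x + t i *s y) = 0"
  shows "cubic_eval c (\<sigma> *s x + \<tau> *s y) = 0"
proof -
  have "cubic_eval c x = 0 \<and> cubic_polar c x y = 0 \<and> cubic_polar c y x = 0 \<and> cubic_eval c y = 0"
  proof (rule binary_cubic_eq_0[OF assms(1-3)])
    fix i assume "i \<in> I"
    from assms(4)[OF this] show "cubic_eval c x * s i ^ 3 + cubic_polar c x y * s i^2 * t i
        + cubic_polar c y x * s i * t i^2 + cubic_eval c y * t i ^ 3 = 0"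
      unfolding cubic_eval_lincomb by (simp add: algebra_simps)
  qed
  then show ?thesis by (simp add: cubic_eval_lincomb)
qed

text \<open>The polar of \<open>x\<close> is linear, so it vanishes identically and \<open>x\<close> is singular.\<close>

lemma not_smooth_if_polar_vanishes:
  assumes "x \<noteq> 0" "cubic_eval c x = 0"
    and "\<And>e. e \<in> plane f \<Longrightarrow> cubic_polar c x e = 0"
    and "lform f u \<noteq> 0" "cubic_polar c x u = 0"
  shows "\<not> smooth_cubic c"
proof -
  have "cubic_polar c x e = 0" for e
  proof -
    let ?k = "lform f e / lform f u"
    have "e - ?k *s u \<in> plane f" using assms(4) by (simp add: plane_def)
    moreover have "e = (e - ?k *s u) + ?k *s u" by simp
    ultimately have "cubic_polar c x e = cubic_polar c x (e - ?k *s u) + ?k * cubic_polar c x u"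
      by (metis cubic_polar_add cubic_polar_scale)
    also have "\<dots> = 0" using assms(3,5) \<open>e - ?k *s u \<in> plane f\<close> by simp
    finally show ?thesis .
  qed
  then have "cubic_deriv c m x = 0" for m
    unfolding cubic_polar_axis[symmetric] .
  then show ?thesis using assms(1,2) unfolding smooth_cubic_def by blast
qed

lemma cubic_polar_eq_0_on_line:
  assumes "infinite (UNIV :: 'a::field set)" "line_on_surface c L" "x \<in> L" "y \<in> L"
  shows "cubic_polar c x (y :: 'a ^ 4) = 0"
proof (rule cubic_polar_eq_0_if_line_on_surface[OF assms(1)])
  fix t :: 'a
  have "1 *s x + t *s y \<in> L"
    using proj_line_lincomb assms(2-4) unfolding line_on_surface_def by blast
  then show "cubic_eval c (x + t *s y) = 0" using assms(2) unfolding line_on_surface_def by simp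
qed

lemma cubic_polar_eq_0_on_span2:
  assumes "infinite (UNIV :: 'a::field set)" "line_on_surface c L" "line_on_surface c M"
    and "x \<in> L" "x \<in> M" "e \<in> span2 L M"
  shows "cubic_polar c x (e :: 'a ^ 4) = 0"
proof -
  obtain y z where "e = y + z" "y \<in> L" "z \<in> M" using assms(6) unfolding span2_def by blast
  then show ?thesis
    using cubic_polar_eq_0_on_line[OF assms(1,2,4)] cubic_polar_eq_0_on_line[OF assms(1,3,5)]
    by (simp add: cubic_polar_add)
qed

section \<open>The quadric through three skew lines\<close>

definition indep4 :: "'a::field ^ 4 \<Rightarrow> 'a ^ 4 \<Rightarrow> 'a ^ 4 \<Rightarrow> 'a ^ 4 \<Rightarrow> bool" where
  "indep4 w1 w2 z1 z2 \<longleftrightarrow> (\<forall>c1 c2 c3 c4. c1 *s w1 + c2 *s w2 + c3 *s z1 + c4 *s z2 = 0 \<longrightarrow>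
      c1 = 0 \<and> c2 = 0 \<and> c3 = 0 \<and> c4 = 0)"

lemma indep4_coeffs_eq:
  assumes "indep4 w1 w2 z1 z2"
    and "c1 *s w1 + c2 *s w2 + c3 *s z1 + c4 *s z2 = d1 *s w1 + d2 *s w2 + d3 *s z1 + d4 *s z2"
  shows "c1 = d1 \<and> c2 = d2 \<and> c3 = d3 \<and> c4 = d4"
proof -
  have "(c1 - d1) *s w1 + (c2 - d2) *s w2 + (c3 - d3) *s z1 + (c4 - d4) *s z2 = 0"
    using assms(2) by (simp add: vec_eq_iff algebra_simps)
  then show ?thesis using assms(1) unfolding indep4_def by (metis right_minus_eq)
qed

lemma indep2_summand:
  assumes "proj_line M" "z1 \<in> M" "z2 \<in> M" "M \<inter> B = {0}"
    and "indep2 (w1 + z1) (w2 + z2)" "\<And>s t. s *s (w1 + z1) + t *s (w2 + z2) \<in> B"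
  shows "indep2 w1 w2"
  unfolding indep2_def
proof (intro allI impI)
  fix s t assume "s *s w1 + t *s w2 = 0"
  then have "s *s (w1 + z1) + t *s (w2 + z2) = s *s z1 + t *s z2"
    by (simp add: vec_eq_iff algebra_simps)
  moreover have "s *s z1 + t *s z2 \<in> M" using proj_line_lincomb assms(1-3) by blast
  ultimately have "s *s (w1 + z1) + t *s (w2 + z2) \<in> M" by simp
  then have "s *s (w1 + z1) + t *s (w2 + z2) = 0" using assms(4,6) by blast
  then show "s = 0 \<and> t = 0" using assms(5) unfolding indep2_def by blast
qed

lemma indep4_if_skew:
  assumes "proj_line B1" "proj_line B2" "B1 \<inter> B2 = {0}"
    and "w1 \<in> B1" "w2 \<in> B1" "z1 \<in> B2" "z2 \<in> B2" "indep2 w1 w2" "indep2 z1 z2"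
  shows "indep4 w1 w2 z1 z2"
  unfolding indep4_def
proof (intro allI impI)
  fix c1 c2 c3 c4 assume e: "c1 *s w1 + c2 *s w2 + c3 *s z1 + c4 *s z2 = 0"
  have "c1 *s w1 + c2 *s w2 = (c1 *s w1 + c2 *s w2 + c3 *s z1 + c4 *s z2) - (c3 *s z1 + c4 *s z2)"
    by simp
  also have "\<dots> = (- c3) *s z1 + (- c4) *s z2" unfolding e by (simp add: vec_eq_iff)
  finally have wz: "c1 *s w1 + c2 *s w2 = (- c3) *s z1 + (- c4) *s z2" .
  have "c1 *s w1 + c2 *s w2 \<in> B1" using proj_line_lincomb assms(1,4,5) by blast
  moreover have "c1 *s w1 + c2 *s w2 \<in> B2"
    unfolding wz using proj_line_lincomb assms(2,6,7) by blast
  ultimately have "c1 *s w1 + c2 *s w2 = 0" using assms(3) by blast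
  then have "c1 *s w1 + c2 *s w2 = 0" "(- c3) *s z1 + (- c4) *s z2 = 0" using wz by simp_all
  then show "c1 = 0 \<and> c2 = 0 \<and> c3 = 0 \<and> c4 = 0"
    using assms(8,9) unfolding indep2_def by fastforce
qed

text \<open>Split a basis of \<open>B\<^sub>3\<close> along the decomposition \<open>k\<^sup>4 = B\<^sub>1 \<oplus> B\<^sub>2\<close>.\<close>

lemma skew_lines_frame:
  assumes l: "proj_line B1" "proj_line B2" "proj_line B3"
    and sk: "B1 \<inter> B2 = {0}" "B1 \<inter> B3 = {0}" "B2 \<inter> B3 = {0}"
  obtains w1 w2 z1 z2 where "indep4 w1 w2 z1 z2"
    "B1 = {s *s w1 + t *s w2 | s t. True}" "B2 = {s *s z1 + t *s z2 | s t. True}"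
    "B3 = {s *s (w1 + z1) + t *s (w2 + z2) | s t. True}"
proof -
  obtain u v where uv: "indep2 u v" "B3 = {s *s u + t *s v | s t. True}"
    using l(3) unfolding proj_line_def indep2_def by blast
  obtain w1 z1 where wz1: "w1 \<in> B1" "z1 \<in> B2" "u = w1 + z1"
    using skew_proj_lines_sum_UNIV[OF l(1,2) sk(1)] by blast
  obtain w2 z2 where wz2: "w2 \<in> B1" "z2 \<in> B2" "v = w2 + z2"
    using skew_proj_lines_sum_UNIV[OF l(1,2) sk(1)] by blast
  have B3: "s *s (w1 + z1) + t *s (w2 + z2) \<in> B3" for s t using uv(2) wz1(3) wz2(3) by blast
  have liw: "indep2 w1 w2"
    using indep2_summand[OF l(2) wz1(2) wz2(2) sk(3)] uv(1) B3 wz1(3) wz2(3) by blast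
  have liz: "indep2 z1 z2"
    using indep2_summand[OF l(1) wz1(1) wz2(1) sk(2), of z1 z2] uv(1) B3 wz1(3) wz2(3)
    by (simp add: add.commute)
  show thesis
  proof (rule that)
    show "indep4 w1 w2 z1 z2" by (rule indep4_if_skew[OF l(1,2) sk(1) wz1(1) wz2(1) wz1(2) wz2(2) liw liz])
  qed (use proj_line_eq_pencil[OF l(1) wz1(1) wz2(1) liw] proj_line_eq_pencil[OF l(2) wz1(2) wz2(2) liz]
      uv(2) wz1(3) wz2(3) in auto)
qed

text \<open>The points of the quadric through the three lines of such a frame, in the two rulings
  \<open>(\<sigma> : \<tau>)\<close> and \<open>(\<alpha> : \<beta>)\<close>.\<close>

definition quadric_point ::
  "'a::field ^ 4 \<Rightarrow> 'a ^ 4 \<Rightarrow> 'a ^ 4 \<Rightarrow> 'a ^ 4 \<Rightarrow> 'a \<Rightarrow> 'a \<Rightarrow> 'a \<Rightarrow> 'a \<Rightarrow> 'a ^ 4" where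
  "quadric_point w1 w2 z1 z2 \<sigma> \<tau> \<alpha> \<beta> = \<alpha> *s (\<sigma> *s w1 + \<tau> *s w2) + \<beta> *s (\<sigma> *s z1 + \<tau> *s z2)"

lemma quadric_point_other_ruling:
  "quadric_point w1 w2 z1 z2 \<sigma> \<tau> \<alpha> \<beta> = \<sigma> *s (\<alpha> *s w1 + \<beta> *s z1) + \<tau> *s (\<alpha> *s w2 + \<beta> *s z2)"
  unfolding quadric_point_def by (simp add: vec_eq_iff algebra_simps)

lemma quadric_point_scale:
  "quadric_point w1 w2 z1 z2 (k * \<sigma>) (k * \<tau>) \<alpha> \<beta> = quadric_point w1 w2 z1 z2 \<sigma> \<tau> (k * \<alpha>) (k * \<beta>)"
  unfolding quadric_point_def by (simp add: vec_eq_iff algebra_simps)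

lemma indep2_quadric_points:
  assumes "indep4 w1 w2 z1 z2" "\<sigma> \<noteq> 0 \<or> \<tau> \<noteq> 0"
  shows "indep2 (quadric_point w1 w2 z1 z2 \<sigma> \<tau> 1 0) (quadric_point w1 w2 z1 z2 \<sigma> \<tau> 0 1)"
  unfolding indep2_def
proof (intro allI impI)
  fix s t
  assume "s *s quadric_point w1 w2 z1 z2 \<sigma> \<tau> 1 0 + t *s quadric_point w1 w2 z1 z2 \<sigma> \<tau> 0 1 = 0"
  then have "(s * \<sigma>) *s w1 + (s * \<tau>) *s w2 + (t * \<sigma>) *s z1 + (t * \<tau>) *s z2
      = 0 *s w1 + 0 *s w2 + 0 *s z1 + 0 *s z2"
    unfolding quadric_point_def by (simp add: vec_eq_iff algebra_simps)
  from indep4_coeffs_eq[OF assms(1) this] assms(2) show "s = 0 \<and> t = 0" by auto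
qed

lemma transversal_is_ruling:
  assumes ind: "indep4 w1 w2 z1 z2"
    and B1: "B1 = {s *s w1 + t *s w2 | s t. True}"
    and B2: "B2 = {s *s z1 + t *s z2 | s t. True}"
    and B3: "B3 = {s *s (w1 + z1) + t *s (w2 + z2) | s t. True}"
    and T: "proj_line T"
    and y1: "y1 \<in> T" "y1 \<in> B1" "y1 \<noteq> 0"
    and y2: "y2 \<in> T" "y2 \<in> B2" "y2 \<noteq> 0"
    and y3: "y3 \<in> T" "y3 \<in> B3" "y3 \<noteq> 0"
  obtains \<sigma> \<tau> where "\<sigma> \<noteq> 0 \<or> \<tau> \<noteq> 0" "\<And>\<alpha> \<beta>. quadric_point w1 w2 z1 z2 \<sigma> \<tau> \<alpha> \<beta> \<in> T"
proof -
  obtain \<sigma> \<tau> where e1: "y1 = \<sigma> *s w1 + \<tau> *s w2" using y1(2) B1 by blast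
  obtain \<sigma>' \<tau>' where e2: "y2 = \<sigma>' *s z1 + \<tau>' *s z2" using y2(2) B2 by blast
  obtain \<rho> \<rho>' where e3: "y3 = \<rho> *s (w1 + z1) + \<rho>' *s (w2 + z2)" using y3(2) B3 by blast
  have nz: "\<sigma> \<noteq> 0 \<or> \<tau> \<noteq> 0" "\<sigma>' \<noteq> 0 \<or> \<tau>' \<noteq> 0" "\<rho> \<noteq> 0 \<or> \<rho>' \<noteq> 0"
    using y1(3) y2(3) y3(3) e1 e2 e3 by auto
  have "indep2 y1 y2"
    unfolding indep2_def
  proof (intro allI impI)
    fix s t assume "s *s y1 + t *s y2 = 0"
    then have "(s * \<sigma>) *s w1 + (s * \<tau>) *s w2 + (t * \<sigma>') *s z1 + (t * \<tau>') *s z2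
        = 0 *s w1 + 0 *s w2 + 0 *s z1 + 0 *s z2"
      unfolding e1 e2 by (simp add: vec_eq_iff algebra_simps)
    from indep4_coeffs_eq[OF ind this] nz(1,2) show "s = 0 \<and> t = 0" by auto
  qed
  then obtain k m where "y3 = k *s y1 + m *s y2"
    using proj_line_eq_pencil[OF T y1(1) y2(1)] y3(1) by blast
  then have "\<rho> *s w1 + \<rho>' *s w2 + \<rho> *s z1 + \<rho>' *s z2
      = (k * \<sigma>) *s w1 + (k * \<tau>) *s w2 + (m * \<sigma>') *s z1 + (m * \<tau>') *s z2"
    unfolding e1 e2 e3 by (simp add: vec_eq_iff algebra_simps)
  from indep4_coeffs_eq[OF ind this]
  have c: "\<rho> = k * \<sigma>" "\<rho>' = k * \<tau>" "\<rho> = m * \<sigma>'" "\<rho>' = m * \<tau>'" by auto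
  with nz(3) have "k \<noteq> 0" by auto
  with c have "\<sigma> *s z1 + \<tau> *s z2 = (m / k) *s y2"
    unfolding e2 by (simp add: vec_eq_iff field_simps)
  then have "quadric_point w1 w2 z1 z2 \<sigma> \<tau> \<alpha> \<beta> = \<alpha> *s y1 + (\<beta> * (m / k)) *s y2" for \<alpha> \<beta>
    unfolding quadric_point_def e1[symmetric] by simp
  then show thesis
    using that[OF nz(1)] proj_line_lincomb[OF T y1(1) y2(1)] by simp
qed

lemma eq_multiple_if_cross_eq:
  assumes "s' \<noteq> 0 \<or> t' \<noteq> 0" "s * t' = s' * (t::'a::field)"
  shows "\<exists>k. s = k * s' \<and> t = k * t'"
proof (cases "s' = 0")
  case True
  then show ?thesis using assms by (intro exI[of _ "t / t'"]) (auto simp: field_simps)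
next
  case False
  then show ?thesis using assms(2) by (intro exI[of _ "s / s'"]) (auto simp: field_simps)
qed

lemma ruling_lines_eq:
  assumes "indep4 w1 w2 z1 z2" "proj_line T" "proj_line T'"
    and "\<sigma> \<noteq> 0 \<or> \<tau> \<noteq> 0" "\<sigma>' \<noteq> 0 \<or> \<tau>' \<noteq> 0" "\<sigma> * \<tau>' = \<sigma>' * \<tau>"
    and "\<And>\<alpha> \<beta>. quadric_point w1 w2 z1 z2 \<sigma> \<tau> \<alpha> \<beta> \<in> T"
    and "\<And>\<alpha> \<beta>. quadric_point w1 w2 z1 z2 \<sigma>' \<tau>' \<alpha> \<beta> \<in> T'"
  shows "T = T'"
proof -
  obtain k where k: "\<sigma> = k * \<sigma>'" "\<tau> = k * \<tau>'"
    using eq_multiple_if_cross_eq[OF assms(5,6)] by blast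
  let ?y = "quadric_point w1 w2 z1 z2 \<sigma> \<tau> 1 0" and ?z = "quadric_point w1 w2 z1 z2 \<sigma> \<tau> 0 1"
  have "?y \<in> T'" "?z \<in> T'"
    unfolding k quadric_point_scale by (rule assms(8))+
  moreover have "?y \<in> T" "?z \<in> T" by (rule assms(7))+
  moreover have "indep2 ?y ?z" by (rule indep2_quadric_points[OF assms(1,4)])
  ultimately show ?thesis
    using proj_line_eq_pencil[OF assms(2), of ?y ?z] proj_line_eq_pencil[OF assms(3), of ?y ?z] by simp
qed

text \<open>On each line of the other ruling the cubic vanishes at four distinct points.\<close>

lemma cubic_vanishes_on_quadric:
  fixes \<sigma> \<tau> :: "nat \<Rightarrow> 'a::field"
  assumes "finite I" "card I = 4"
    and "\<And>i j. i \<in> I \<Longrightarrow> j \<in> I \<Longrightarrow> i \<noteq> j \<Longrightarrow> \<sigma> i * \<tau> j \<noteq> \<sigma> j * \<tau> i"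
    and "\<And>i \<alpha> \<beta>. i \<in> I \<Longrightarrow> cubic_eval c (quadric_point w1 w2 z1 z2 (\<sigma> i) (\<tau> i) \<alpha> \<beta>) = 0"
  shows "cubic_eval c (quadric_point w1 w2 z1 z2 \<sigma>0 \<tau>0 \<alpha> \<beta>) = 0"
proof -
  have "cubic_eval c (\<sigma> i *s (\<alpha> *s w1 + \<beta> *s z1) + \<tau> i *s (\<alpha> *s w2 + \<beta> *s z2)) = 0"
    if "i \<in> I" for i
    using assms(4)[OF that] unfolding quadric_point_other_ruling .
  from cubic_vanishes_on_pencil[OF assms(1-3) this] show ?thesis
    unfolding quadric_point_other_ruling .
qed

lemma transversals_parameters:
  fixes B :: "nat \<Rightarrow> ('a::field ^ 4) set"
  assumes ind: "indep4 w1 w2 z1 z2"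
    and B: "B 1 = {s *s w1 + t *s w2 | s t. True}" "B 2 = {s *s z1 + t *s z2 | s t. True}"
      "B 3 = {s *s (w1 + z1) + t *s (w2 + z2) | s t. True}"
    and T: "\<And>i. i \<in> I \<Longrightarrow> proj_line (T i)"
    and meets: "\<And>i k. i \<in> I \<Longrightarrow> k \<in> {1, 2, 3} \<Longrightarrow> \<exists>y. y \<noteq> 0 \<and> y \<in> T i \<and> y \<in> B k"
    and "inj_on T I"
  obtains \<sigma> \<tau> where "\<And>i j. i \<in> I \<Longrightarrow> j \<in> I \<Longrightarrow> i \<noteq> j \<Longrightarrow> \<sigma> i * \<tau> j \<noteq> \<sigma> j * \<tau> i"
    and "\<And>i \<alpha> \<beta>. i \<in> I \<Longrightarrow> quadric_point w1 w2 z1 z2 (\<sigma> i) (\<tau> i) \<alpha> \<beta> \<in> T i"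
proof -
  let ?on_T = "\<lambda>i \<sigma> \<tau>. (\<sigma> \<noteq> 0 \<or> \<tau> \<noteq> 0) \<and> (\<forall>\<alpha> \<beta>. quadric_point w1 w2 z1 z2 \<sigma> \<tau> \<alpha> \<beta> \<in> T i)"
  have "\<exists>st. ?on_T i (fst st) (snd st)" if i: "i \<in> I" for i
  proof -
    obtain y1 y2 y3 where y: "y1 \<in> T i" "y1 \<in> B 1" "y1 \<noteq> 0" "y2 \<in> T i" "y2 \<in> B 2" "y2 \<noteq> 0"
      "y3 \<in> T i" "y3 \<in> B 3" "y3 \<noteq> 0"
      using meets[OF i, of 1] meets[OF i, of 2] meets[OF i, of 3] by auto
    obtain \<sigma> \<tau> where "?on_T i \<sigma> \<tau>"
      by (rule transversal_is_ruling[OF ind B T[OF i] y]) blast+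
    then show ?thesis by (intro exI[of _ "(\<sigma>, \<tau>)"]) simp
  qed
  then have "\<exists>st. \<forall>i\<in>I. ?on_T i (fst (st i)) (snd (st i))" by (rule bchoice[rule_format])
  then obtain st where st: "\<And>i. i \<in> I \<Longrightarrow> ?on_T i (fst (st i)) (snd (st i))" by blast
  show thesis
  proof (rule that[of "fst \<circ> st" "snd \<circ> st"])
    fix i j assume ij: "i \<in> I" "j \<in> I" "i \<noteq> j"
    show "(fst \<circ> st) i * (snd \<circ> st) j \<noteq> (fst \<circ> st) j * (snd \<circ> st) i"
    proof
      assume "(fst \<circ> st) i * (snd \<circ> st) j = (fst \<circ> st) j * (snd \<circ> st) i"
      with st[OF ij(1)] st[OF ij(2)] have "T i = T j"
        by (intro ruling_lines_eq[OF ind T[OF ij(1)] T[OF ij(2)], where \<sigma> = "fst (st i)"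
              and \<tau> = "snd (st i)" and \<sigma>' = "fst (st j)" and \<tau>' = "snd (st j)"]) auto
      then show False using \<open>inj_on T I\<close> ij by (auto dest: inj_onD)
    qed
  qed (use st in auto)
qed

section \<open>The planes of a double-six\<close>

lemma perm3_range:
  assumes "{r, s, t} = {1, 2, 3::nat}"
  shows "r \<in> {1..6}" "s \<in> {1..6}" "t \<in> {1..6}"
proof -
  have "r \<in> {1, 2, 3}" "s \<in> {1, 2, 3}" "t \<in> {1, 2, 3}" unfolding assms[symmetric] by simp_all
  then show "r \<in> {1..6}" "s \<in> {1..6}" "t \<in> {1..6}" by auto
qed

lemma perm3_extend:
  assumes "r \<in> {1, 2, 3::nat}"
  obtains s t where "{r, s, t} = {1, 2, 3}" "distinct [r, s, t]"
proof -
  have "r = 1 \<or> r = 2 \<or> r = 3" using assms by auto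
  then show thesis
    using that[of 2 3] that[of 3 1] that[of 1 2] by (elim disjE) (simp_all add: insert_commute)
qed

locale double_six_planes =
  fixes c :: "4 \<Rightarrow> 4 \<Rightarrow> 4 \<Rightarrow> 'a::field"
    and a b :: "nat \<Rightarrow> ('a ^ 4) set"
    and \<pi> :: "nat \<Rightarrow> nat \<Rightarrow> 'a ^ 4"
  assumes double_six: "double_six c a b"
    and planes: "\<forall>i\<in>{1..6}. \<forall>j\<in>{1..6}. i \<noteq> j \<longrightarrow>
                   \<pi> i j \<noteq> 0 \<and> {x. lform (\<pi> i j) x = 0} = span2 (b i) (a j)"
begin

lemma a_on_surface: "i \<in> {1..6} \<Longrightarrow> line_on_surface c (a i)"
  and b_on_surface: "i \<in> {1..6} \<Longrightarrow> line_on_surface c (b i)"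
  using double_six unfolding double_six_def by blast+

lemma proj_line_a: "i \<in> {1..6} \<Longrightarrow> proj_line (a i)"
  and proj_line_b: "i \<in> {1..6} \<Longrightarrow> proj_line (b i)"
  using a_on_surface b_on_surface unfolding line_on_surface_def by blast+

lemma skew_a: "i \<in> {1..6} \<Longrightarrow> j \<in> {1..6} \<Longrightarrow> i \<noteq> j \<Longrightarrow> a i \<inter> a j = {0}"
  using double_six unfolding double_six_def skew_def by blast

lemma skew_b: "i \<in> {1..6} \<Longrightarrow> j \<in> {1..6} \<Longrightarrow> i \<noteq> j \<Longrightarrow> b i \<inter> b j = {0}"
  using double_six unfolding double_six_def skew_def by blast

lemma a_Int_b_same: "i \<in> {1..6} \<Longrightarrow> a i \<inter> b i = {0}"
  using double_six unfolding double_six_def meets_def by blast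

lemma a_meets_b:
  assumes "i \<in> {1..6}" "j \<in> {1..6}" "i \<noteq> j"
  shows "\<exists>x. x \<noteq> 0 \<and> x \<in> a i \<and> x \<in> b j"
proof -
  have "a i \<inter> b j \<noteq> {0}" using double_six assms unfolding double_six_def meets_def by blast
  moreover have "0 \<in> a i \<inter> b j" using proj_line_a proj_line_b assms proj_line_zero by blast
  ultimately show ?thesis by blast
qed

lemma a_inj:
  assumes "i \<in> {1..6}" "j \<in> {1..6}" "i \<noteq> j" shows "a i \<noteq> a j"
proof
  assume "a i = a j"
  moreover obtain x where "x \<in> a i" "x \<noteq> 0" using proj_line_nonzero[OF proj_line_a[OF assms(1)]] by blast
  ultimately show False using skew_a[OF assms] by blast
qed

lemma plane_nonzero: "i \<in> {1..6} \<Longrightarrow> j \<in> {1..6} \<Longrightarrow> i \<noteq> j \<Longrightarrow> \<pi> i j \<noteq> 0"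
  using planes by blast

lemma plane_eq_span2: "i \<in> {1..6} \<Longrightarrow> j \<in> {1..6} \<Longrightarrow> i \<noteq> j \<Longrightarrow> plane (\<pi> i j) = span2 (b i) (a j)"
  using planes unfolding plane_def by blast

lemma b_subset_plane:
  assumes "i \<in> {1..6}" "j \<in> {1..6}" "i \<noteq> j" shows "b i \<subseteq> plane (\<pi> i j)"
proof
  fix x assume "x \<in> b i"
  moreover have "0 \<in> a j" using proj_line_zero[OF proj_line_a[OF assms(2)]] .
  ultimately have "x \<in> span2 (b i) (a j)" unfolding span2_def by force
  then show "x \<in> plane (\<pi> i j)" using plane_eq_span2[OF assms] by simp
qed

lemma a_subset_plane:
  assumes "i \<in> {1..6}" "j \<in> {1..6}" "i \<noteq> j" shows "a j \<subseteq> plane (\<pi> i j)"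
proof
  fix x assume "x \<in> a j"
  moreover have "0 \<in> b i" using proj_line_zero[OF proj_line_b[OF assms(1)]] .
  ultimately have "x \<in> span2 (b i) (a j)" unfolding span2_def by force
  then show "x \<in> plane (\<pi> i j)" using plane_eq_span2[OF assms] by simp
qed

lemma a_not_subset_plane:
  assumes "r \<in> {1..6}" "s \<in> {1..6}" "j \<in> {1..6}" "r \<noteq> s" "j \<noteq> s"
  shows "\<not> a j \<subseteq> plane (\<pi> r s)"
proof
  assume "a j \<subseteq> plane (\<pi> r s)"
  from coplanar_proj_lines_meet[OF proj_line_a[OF assms(3)] proj_line_a[OF assms(2)]
      plane_nonzero[OF assms(1,2,4)] this a_subset_plane[OF assms(1,2,4)]]
  show False using skew_a[OF assms(3,2,5)] by blast
qed

lemma b_not_subset_plane: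
  assumes "r \<in> {1..6}" "s \<in> {1..6}" "i \<in> {1..6}" "r \<noteq> s" "i \<noteq> r"
  shows "\<not> b i \<subseteq> plane (\<pi> r s)"
proof
  assume "b i \<subseteq> plane (\<pi> r s)"
  from coplanar_proj_lines_meet[OF proj_line_b[OF assms(3)] proj_line_b[OF assms(1)]
      plane_nonzero[OF assms(1,2,4)] this b_subset_plane[OF assms(1,2,4)]]
  show False using skew_b[OF assms(3,1,5)] by blast
qed

lemma plane_Int_plane_subset_b:
  assumes "i \<in> {1..6}" "j \<in> {1..6}" "k \<in> {1..6}" "i \<noteq> j" "i \<noteq> k" "j \<noteq> k"
  shows "plane (\<pi> i j) \<inter> plane (\<pi> i k) \<subseteq> b i"
proof (rule plane_Int_plane_subset[OF plane_nonzero[OF assms(1,2,4)] plane_nonzero[OF assms(1,3,5)] _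
      proj_line_b[OF assms(1)] b_subset_plane[OF assms(1,2,4)] b_subset_plane[OF assms(1,3,5)]])
  show "plane (\<pi> i j) \<noteq> plane (\<pi> i k)"
    using a_not_subset_plane[OF assms(1,3,2,5)] a_subset_plane[OF assms(1,2,4)] assms(6) by auto
qed

lemma plane_Int_plane_subset_a:
  assumes "i \<in> {1..6}" "j \<in> {1..6}" "k \<in> {1..6}" "i \<noteq> j" "k \<noteq> j" "i \<noteq> k"
  shows "plane (\<pi> i j) \<inter> plane (\<pi> k j) \<subseteq> a j"
proof (rule plane_Int_plane_subset[OF plane_nonzero[OF assms(1,2,4)] plane_nonzero[OF assms(3,2,5)] _
      proj_line_a[OF assms(2)] a_subset_plane[OF assms(1,2,4)] a_subset_plane[OF assms(3,2,5)]])
  show "plane (\<pi> i j) \<noteq> plane (\<pi> k j)"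
    using b_not_subset_plane[OF assms(3,2,1,5)] b_subset_plane[OF assms(1,2,4)] assms(6) by auto
qed

definition Rmat :: "'a lmatrix" where
  "Rmat = (\<lambda>r s. if r = s then 0 else \<pi> r s)"

lemma planes_locus_Rmat:
  assumes "{r, s, t} = {1, 2, 3}" "distinct [r, s, t]"
  shows "planes_locus Rmat p = {x.
      p s * lform (\<pi> r s) x + p t * lform (\<pi> r t) x = 0 \<and>
      p r * lform (\<pi> s r) x + p t * lform (\<pi> s t) x = 0 \<and>
      p r * lform (\<pi> t r) x + p s * lform (\<pi> t s) x = 0}"
  unfolding planes_locus_def assms(1)[symmetric] using assms(2)
  by (simp add: Rmat_def)

lemma planes_locus_single:
  assumes "{r, s, t} = {1, 2, 3}" "distinct [r, s, t]" "p r = 0" "p s \<noteq> 0" "p t = 0"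
  shows "planes_locus Rmat p = a s"
proof -
  note idx = perm3_range[OF assms(1)]
  have "planes_locus Rmat p = plane (\<pi> r s) \<inter> plane (\<pi> t s)"
    using assms(3-5) unfolding planes_locus_Rmat[OF assms(1,2)] by (auto simp: plane_def)
  moreover have "plane (\<pi> r s) \<inter> plane (\<pi> t s) \<subseteq> a s"
    using assms(2) by (intro plane_Int_plane_subset_a idx) auto
  moreover have "a s \<subseteq> plane (\<pi> r s)" "a s \<subseteq> plane (\<pi> t s)"
    using assms(2) by (intro a_subset_plane idx; auto)+
  ultimately show ?thesis by blast
qed

lemma planes_locus_two_nonzero:
  assumes "{r, s, t} = {1, 2, 3}" "distinct [r, s, t]" "p r = 0" "p s \<noteq> 0" "p t \<noteq> 0"
  shows "\<not> proj_line (planes_locus Rmat p)"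
proof
  let ?L = "planes_locus Rmat p"
  assume L: "proj_line ?L"
  note idx = perm3_range[OF assms(1)]
  have d: "r \<noteq> s" "s \<noteq> t" "r \<noteq> t" "s \<noteq> r" "t \<noteq> s" "t \<noteq> r" using assms(2) by auto
  have row_r: "p s * lform (\<pi> r s) x + p t * lform (\<pi> r t) x = 0" if "x \<in> ?L" for x
    using that unfolding planes_locus_Rmat[OF assms(1,2)] by blast
  have L_st: "?L \<subseteq> plane (\<pi> s t)" and L_ts: "?L \<subseteq> plane (\<pi> t s)"
    using assms(3-5) unfolding planes_locus_Rmat[OF assms(1,2)] by (auto simp: plane_def)
  obtain x where x: "x \<noteq> 0" "x \<in> ?L" "x \<in> a s"
    using coplanar_proj_lines_meet[OF L proj_line_a[OF idx(2)] plane_nonzero[OF idx(3,2) d(5)]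
        L_ts a_subset_plane[OF idx(3,2) d(5)]] by blast
  then have "lform (\<pi> r s) x = 0" using a_subset_plane[OF idx(1,2) d(1)] by (auto simp: plane_def)
  then have xb: "x \<in> b r"
    using row_r[OF x(2)] assms(5) plane_Int_plane_subset_b[OF idx d(1,3,2)] by (auto simp: plane_def)
  obtain x' where x': "x' \<noteq> 0" "x' \<in> ?L" "x' \<in> a t"
    using coplanar_proj_lines_meet[OF L proj_line_a[OF idx(3)] plane_nonzero[OF idx(2,3) d(2)]
        L_st a_subset_plane[OF idx(2,3) d(2)]] by blast
  then have "lform (\<pi> r t) x' = 0" using a_subset_plane[OF idx(1,3) d(3)] by (auto simp: plane_def)
  then have xb': "x' \<in> b r"
    using row_r[OF x'(2)] assms(4) plane_Int_plane_subset_b[OF idx d(1,3,2)] by (auto simp: plane_def)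
  show False
  proof (cases "indep2 x x'")
    case True
    then have "b r = ?L"
      using proj_lines_eq_if_indep2_common[OF proj_line_b[OF idx(1)] L xb xb' x(2) x'(2)] by blast
    then show False using b_not_subset_plane[OF idx(2,3,1) d(2,1)] L_st by simp
  next
    case False
    then obtain k where "x = k *s x'" using not_indep2_imp_multiple x'(1) by blast
    then have "x \<in> a t" using proj_line_lincomb[OF proj_line_a[OF idx(3)] x'(3) x'(3), of k 0] by simp
    then show False using x skew_a[OF idx(2,3) d(2)] by blast
  qed
qed

lemma planes_locus_meets_b:
  assumes "{r, s, t} = {1, 2, 3}" "distinct [r, s, t]" "p t \<noteq> 0"
    and "proj_line (planes_locus Rmat p)"
  shows "\<exists>y. y \<noteq> 0 \<and> y \<in> planes_locus Rmat p \<and> y \<in> b r"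
proof -
  note idx = perm3_range[OF assms(1)]
  obtain y where y: "y \<in> planes_locus Rmat p" "y \<noteq> 0" "lform (\<pi> r s) y = 0"
    using proj_line_meets_plane[OF assms(4)] by blast
  then have "lform (\<pi> r t) y = 0" using assms(3) unfolding planes_locus_Rmat[OF assms(1,2)] by auto
  then have "y \<in> b r"
    using y(3) plane_Int_plane_subset_b[OF idx] assms(2) by (auto simp: plane_def)
  then show ?thesis using y by blast
qed

lemma row_form_nonzero:
  assumes "r \<in> {1..6}" "s \<in> {1..6}" "s' \<in> {1..6}" "r \<noteq> s" "r \<noteq> s'" "s \<noteq> s'" "q' \<noteq> 0"
  shows "q *s \<pi> r s + q' *s \<pi> r s' \<noteq> 0"
proof
  assume zero: "q *s \<pi> r s + q' *s \<pi> r s' = 0"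
  obtain x where "x \<in> a s" "lform (\<pi> r s') x \<noteq> 0"
    using a_not_subset_plane[OF assms(1,3,2,5,6)] by (auto simp: plane_def)
  moreover have "lform (\<pi> r s) x = 0" using a_subset_plane[OF assms(1,2,4)] \<open>x \<in> a s\<close> by (auto simp: plane_def)
  ultimately have "lform (q *s \<pi> r s + q' *s \<pi> r s') x \<noteq> 0" using assms(7) by simp
  with zero show False by simp
qed

lemma b_subset_row_plane:
  assumes "r \<in> {1..6}" "s \<in> {1..6}" "s' \<in> {1..6}" "r \<noteq> s" "r \<noteq> s'"
  shows "b r \<subseteq> plane (q *s \<pi> r s + q' *s \<pi> r s')"
proof
  fix x assume "x \<in> b r"
  then have "x \<in> plane (\<pi> r s)" "x \<in> plane (\<pi> r s')"
    using b_subset_plane[OF assms(1,2,4)] b_subset_plane[OF assms(1,3,5)] by blast+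
  then show "x \<in> plane (q *s \<pi> r s + q' *s \<pi> r s')" by (simp add: plane_def)
qed

lemma a_subset_row_plane:
  assumes "j \<in> {1..6}" "r \<in> {1..6}" "s \<in> {1..6}" "s' \<in> {1..6}" "r \<noteq> s" "r \<noteq> s'" "j \<noteq> r"
    and "z \<in> a j" "lform (\<pi> r s) z \<noteq> 0" "lform (q *s \<pi> r s + q' *s \<pi> r s') z = 0"
  shows "a j \<subseteq> plane (q *s \<pi> r s + q' *s \<pi> r s')"
proof -
  obtain y where y: "y \<noteq> 0" "y \<in> a j" "y \<in> b r" using a_meets_b[OF assms(1,2,7)] by blast
  have "y \<in> plane (\<pi> r s)" "y \<in> plane (q *s \<pi> r s + q' *s \<pi> r s')"
    using b_subset_plane[OF assms(2,3,5)] b_subset_row_plane[OF assms(2-6)] y(3) by blast+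
  moreover have "z \<in> plane (q *s \<pi> r s + q' *s \<pi> r s')" using assms(10) by (simp add: plane_def)
  moreover have "indep2 y z"
    by (rule indep2_if_separated[OF y(1) _ assms(9)]) (use \<open>y \<in> plane (\<pi> r s)\<close> in \<open>simp add: plane_def\<close>)
  ultimately show ?thesis
    using proj_line_subset_plane[OF proj_line_a[OF assms(1)] y(2) assms(8)] by blast
qed

lemma planes_locus_eq_line:
  assumes "proj_line A" "A \<subseteq> planes_locus Rmat p" "p 3 \<noteq> 0"
  shows "planes_locus Rmat p = A"
proof -
  define l1 where "l1 = p 2 *s \<pi> 1 2 + p 3 *s \<pi> 1 3"
  define l2 where "l2 = p 1 *s \<pi> 2 1 + p 3 *s \<pi> 2 3"
  have locus: "planes_locus Rmat p \<subseteq> plane l1 \<inter> plane l2"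
    using planes_locus_Rmat[of 1 2 3 p] unfolding l1_def l2_def by (auto simp: plane_def)
  have l1: "l1 \<noteq> 0" and l2: "l2 \<noteq> 0"
    unfolding l1_def l2_def using assms(3) by (intro row_form_nonzero; simp)+
  have b1: "b 1 \<subseteq> plane l1" and b2: "b 2 \<subseteq> plane l2"
    unfolding l1_def l2_def by (intro b_subset_row_plane; simp)+
  have "plane l1 \<noteq> plane l2"
  proof
    assume "plane l1 = plane l2"
    with b2 have "b 2 \<subseteq> plane l1" by simp
    from coplanar_proj_lines_meet[OF proj_line_b proj_line_b l1 b1 this] skew_b[of 1 2]
    show False by auto
  qed
  then have "plane l1 \<inter> plane l2 \<subseteq> A"
    by (rule plane_Int_plane_subset[OF l1 l2 _ assms(1)]) (use assms(2) locus in auto)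
  with locus assms(2) show ?thesis by blast
qed

end

section \<open>The skew lines of the determinantal representation\<close>

locale determinantal_double_six = double_six_planes c a b \<pi>
  for c :: "4 \<Rightarrow> 4 \<Rightarrow> 4 \<Rightarrow> 'a::alg_closed_field" and a b \<pi> +
  fixes \<mu> :: 'a
  assumes smooth: "smooth_cubic c"
    and scaling_nonzero: "\<mu> \<noteq> 0"
    and scaling: "\<And>x. lform (\<pi> 1 2) x * lform (\<pi> 2 3) x * lform (\<pi> 3 1) x
      + lform (\<pi> 1 3) x * lform (\<pi> 2 1) x * lform (\<pi> 3 2) x = \<mu> * cubic_eval c x"
begin

text \<open>The point \<open>x\<close> where \<open>a\<^sub>1\<close> meets \<open>b\<^sub>2\<close> lies on the quadric, so the polar of
  \<open>x\<close> vanishes in the direction of its ruling through \<open>x\<close>, which leaves the tangent plane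
  \<open>\<pi>\<^sub>2\<^sub>1\<close> spanned by \<open>a\<^sub>1\<close> and \<open>b\<^sub>2\<close>: \<open>x\<close> would be singular.\<close>

lemma quadric_through_b_not_on_surface:
  assumes frame: "indep4 w1 w2 z1 z2" "b 1 = {s *s w1 + t *s w2 | s t. True}"
      "b 2 = {s *s z1 + t *s z2 | s t. True}" "b 3 = {s *s (w1 + z1) + t *s (w2 + z2) | s t. True}"
    and on_surface: "\<And>\<sigma> \<tau> \<alpha> \<beta>. cubic_eval c (quadric_point w1 w2 z1 z2 \<sigma> \<tau> \<alpha> \<beta>) = 0"
  shows False
proof -
  obtain x where x: "x \<noteq> 0" "x \<in> a 1" "x \<in> b 2" using a_meets_b[of 1 2] by auto
  obtain \<sigma> \<tau> where x_eq: "x = \<sigma> *s z1 + \<tau> *s z2" using frame(3) x(3) by blast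
  define u where "u = \<sigma> *s w1 + \<tau> *s w2"
  have "x + t *s u = quadric_point w1 w2 z1 z2 \<sigma> \<tau> t 1" for t
    unfolding quadric_point_def x_eq u_def by (simp add: vec_eq_iff algebra_simps)
  then have polar_u: "cubic_polar c x u = 0"
    using on_surface by (intro cubic_polar_eq_0_if_line_on_surface[OF infinite_UNIV_alg_closed]) simp
  have "lform (\<pi> 2 1) u \<noteq> 0"
  proof
    assume "lform (\<pi> 2 1) u = 0"
    then have u: "u \<in> plane (\<pi> 2 1)" by (simp add: plane_def)
    have "u + x = \<sigma> *s (w1 + z1) + \<tau> *s (w2 + z2)"
      unfolding u_def x_eq by (simp add: vec_eq_iff algebra_simps)
    then have "u + x \<in> b 3" using frame(4) by blast
    then have "u + x \<in> plane (\<pi> 3 1)" using b_subset_plane[of 3 1] by auto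
    moreover have "x \<in> plane (\<pi> 2 1)" using b_subset_plane[of 2 1] x(3) by auto
    then have "u + x \<in> plane (\<pi> 2 1)" using u by (simp add: plane_def)
    ultimately have "u + x \<in> a 1" using plane_Int_plane_subset_a[of 2 1 3] by auto
    moreover have "proj_line (a 1)" by (rule proj_line_a) simp
    ultimately have "1 *s (u + x) + (- 1) *s x \<in> a 1" using x(2) proj_line_lincomb by blast
    then have "u \<in> a 1" by simp
    moreover have "u \<in> b 1" using frame(2) u_def by blast
    ultimately have "u = 0" using a_Int_b_same[of 1] by auto
    then have "\<sigma> *s w1 + \<tau> *s w2 + 0 *s z1 + 0 *s z2 = 0 *s w1 + 0 *s w2 + 0 *s z1 + 0 *s z2"
      unfolding u_def by simp
    then have "\<sigma> = 0 \<and> \<tau> = 0" using indep4_coeffs_eq[OF frame(1)] by blast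
    then show False using x(1) x_eq by simp
  qed
  moreover have "cubic_polar c x e = 0" if "e \<in> plane (\<pi> 2 1)" for e
    using that plane_eq_span2[of 2 1] cubic_polar_eq_0_on_span2[OF infinite_UNIV_alg_closed
        b_on_surface a_on_surface x(3) x(2)] by simp
  moreover have "cubic_eval c x = 0" using b_on_surface[of 2] x(3) unfolding line_on_surface_def by simp
  ultimately have "\<not> smooth_cubic c"
    using not_smooth_if_polar_vanishes[OF x(1)] polar_u by blast
  then show False using smooth by simp
qed

lemma no_four_transversals:
  assumes "\<And>i. i \<in> {1..4} \<Longrightarrow> line_on_surface c (T i)"
    and "\<And>i k. i \<in> {1..4} \<Longrightarrow> k \<in> {1, 2, 3} \<Longrightarrow> \<exists>y. y \<noteq> 0 \<and> y \<in> T i \<and> y \<in> b k"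
    and "inj_on T {1..4::nat}"
  shows False
proof -
  have "proj_line (b 1)" "proj_line (b 2)" "proj_line (b 3)" by (rule proj_line_b; simp)+
  moreover have "b 1 \<inter> b 2 = {0}" "b 1 \<inter> b 3 = {0}" "b 2 \<inter> b 3 = {0}" by (rule skew_b; simp)+
  ultimately obtain w1 w2 z1 z2 where frame: "indep4 w1 w2 z1 z2" "b 1 = {s *s w1 + t *s w2 | s t. True}"
      "b 2 = {s *s z1 + t *s z2 | s t. True}" "b 3 = {s *s (w1 + z1) + t *s (w2 + z2) | s t. True}"
    by (rule skew_lines_frame)
  have "proj_line (T i)" if "i \<in> {1..4}" for i
    using assms(1)[OF that] unfolding line_on_surface_def by blast
  then obtain \<sigma> \<tau> where
    np: "\<And>i j. i \<in> {1..4} \<Longrightarrow> j \<in> {1..4} \<Longrightarrow> i \<noteq> j \<Longrightarrow> \<sigma> i * \<tau> j \<noteq> \<sigma> j * \<tau> i" and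
    on_T: "\<And>i \<alpha> \<beta>. i \<in> {1..4} \<Longrightarrow> quadric_point w1 w2 z1 z2 (\<sigma> i) (\<tau> i) \<alpha> \<beta> \<in> T i"
    by (rule transversals_parameters[OF frame _ assms(2,3)]) blast+
  have on_surface: "cubic_eval c (quadric_point w1 w2 z1 z2 (\<sigma> i) (\<tau> i) \<alpha> \<beta>) = 0"
    if "i \<in> {1..4}" for i \<alpha> \<beta>
    using on_T[OF that] assms(1)[OF that] unfolding line_on_surface_def by blast
  have "cubic_eval c (quadric_point w1 w2 z1 z2 \<sigma>' \<tau>' \<alpha> \<beta>) = 0" for \<sigma>' \<tau>' \<alpha> \<beta>
    by (rule cubic_vanishes_on_quadric[where I = "{1..4}", OF _ _ np on_surface]) simp_all
  then show False by (rule quadric_through_b_not_on_surface[OF frame])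
qed

lemma planes_locus_on_surface:
  assumes "p 1 \<noteq> 0" "p 2 \<noteq> 0" "p 3 \<noteq> 0" "x \<in> planes_locus Rmat p"
  shows "cubic_eval c x = 0"
proof -
  have rows: "p 2 * lform (\<pi> 1 2) x + p 3 * lform (\<pi> 1 3) x = 0"
    "p 1 * lform (\<pi> 2 1) x + p 3 * lform (\<pi> 2 3) x = 0"
    "p 1 * lform (\<pi> 3 1) x + p 2 * lform (\<pi> 3 2) x = 0"
    using assms(4) planes_locus_Rmat[of 1 2 3 p] by auto
  have solved: "lform (\<pi> 1 3) x = - (p 2 * lform (\<pi> 1 2) x) / p 3"
    "lform (\<pi> 2 1) x = - (p 3 * lform (\<pi> 2 3) x) / p 1"
    "lform (\<pi> 3 2) x = - (p 1 * lform (\<pi> 3 1) x) / p 2"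
    using rows assms(1-3) by (simp_all add: field_simps add_eq_0_iff2)
  have "\<mu> * cubic_eval c x = 0"
    unfolding scaling[symmetric] solved using assms(1-3) by (simp add: field_simps)
  then show ?thesis using scaling_nonzero by simp
qed

lemma planes_locus_all_nonzero:
  assumes "p 1 \<noteq> 0" "p 2 \<noteq> 0" "p 3 \<noteq> 0" "proj_line (planes_locus Rmat p)"
  shows "planes_locus Rmat p \<in> a ` {1..6}"
proof (rule ccontr)
  let ?L = "planes_locus Rmat p"
  assume L_new: "?L \<notin> a ` {1..6}"
  define T where "T i = (if i \<le> 3 then a (i + 3) else ?L)" for i :: nat
  have a_idx: "i + 3 \<in> {1..6}" if "i \<le> 3" for i :: nat using that by simp
  have L_on_surface: "line_on_surface c ?L"
    using assms(4) planes_locus_on_surface[OF assms(1-3)] unfolding line_on_surface_def by blast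
  have L_meets: "\<exists>y. y \<noteq> 0 \<and> y \<in> ?L \<and> y \<in> b k" if k: "k \<in> {1, 2, 3}" for k
  proof -
    obtain s t where kst: "{k, s, t} = {1, 2, 3}" "distinct [k, s, t]" using perm3_extend[OF k] .
    have "t \<in> {1, 2, 3}" unfolding kst(1)[symmetric] by simp
    then have "p t \<noteq> 0" using assms(1-3) by auto
    then show ?thesis by (rule planes_locus_meets_b[OF kst _ assms(4)])
  qed
  show False
  proof (rule no_four_transversals[of T])
    fix i :: nat assume "i \<in> {1..4}"
    then show "line_on_surface c (T i)"
      using a_on_surface[OF a_idx] L_on_surface by (simp add: T_def)
  next
    fix i k :: nat assume i: "i \<in> {1..4}" and k: "k \<in> {1, 2, 3}"
    have "k \<in> {1..6}" "i + 3 \<noteq> k" using i k by auto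
    then show "\<exists>y. y \<noteq> 0 \<and> y \<in> T i \<and> y \<in> b k"
      using a_meets_b[OF a_idx] L_meets[OF k] by (simp add: T_def)
  next
    have "a (i + 3) \<noteq> ?L" if "i \<le> 3" for i using L_new a_idx[OF that] by blast
    then show "inj_on T {1..4}"
      using a_inj[OF a_idx a_idx] unfolding inj_on_def T_def by (auto split: if_splits)
  qed
qed

text \<open>At a point \<open>z\<close> of \<open>a\<^sub>j\<close> off all six planes, \<open>p = (\<pi>\<^sub>1\<^sub>2 \<pi>\<^sub>2\<^sub>3, \<pi>\<^sub>1\<^sub>3 \<pi>\<^sub>2\<^sub>1, -\<pi>\<^sub>1\<^sub>2 \<pi>\<^sub>2\<^sub>1)(z)\<close>
  makes the first two rows vanish at \<open>z\<close> identically and the third one because \<open>z\<close> lies on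
  the surface; each row also vanishes where \<open>a\<^sub>j\<close> meets \<open>b\<^sub>r\<close>.\<close>

lemma a_subset_planes_locus:
  assumes j: "j \<in> {1..6}" "j \<notin> {1, 2, 3}"
  obtains p where "p 3 \<noteq> 0" "a j \<subseteq> planes_locus Rmat p"
proof -
  let ?G = "{\<pi> 1 2, \<pi> 1 3, \<pi> 2 1, \<pi> 2 3, \<pi> 3 1, \<pi> 3 2}"
  obtain z where z: "z \<in> a j" "\<forall>f\<in>?G. lform f z \<noteq> 0"
  proof (rule bexE[OF proj_line_avoids_planes[OF infinite_UNIV_alg_closed proj_line_a[OF j(1)]]])
    show "\<And>f. f \<in> ?G \<Longrightarrow> \<not> a j \<subseteq> plane f"
      using j by (elim insertE; simp) (rule a_not_subset_plane; auto)+
  qed auto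
  define p where "p s = (if s = 1 then lform (\<pi> 1 2) z * lform (\<pi> 2 3) z
      else if s = 2 then lform (\<pi> 1 3) z * lform (\<pi> 2 1) z
      else - (lform (\<pi> 1 2) z * lform (\<pi> 2 1) z))" for s :: nat
  have "a j \<subseteq> plane (p 2 *s \<pi> 1 2 + p 3 *s \<pi> 1 3)"
    using j z by (intro a_subset_row_plane) (auto simp: p_def)
  moreover have "a j \<subseteq> plane (p 1 *s \<pi> 2 1 + p 3 *s \<pi> 2 3)"
    using j z by (intro a_subset_row_plane) (auto simp: p_def)
  moreover have "a j \<subseteq> plane (p 1 *s \<pi> 3 1 + p 2 *s \<pi> 3 2)"
  proof (rule a_subset_row_plane)
    have "cubic_eval c z = 0" using a_on_surface[OF j(1)] z(1) unfolding line_on_surface_def by blast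
    then show "lform (p 1 *s \<pi> 3 1 + p 2 *s \<pi> 3 2) z = 0"
      using scaling[of z] by (simp add: p_def algebra_simps)
  qed (use j z in auto)
  ultimately have "a j \<subseteq> planes_locus Rmat p"
    using planes_locus_Rmat[of 1 2 3 p] by (auto simp: plane_def subset_iff)
  moreover have "p 3 \<noteq> 0" using z(2) by (simp add: p_def)
  ultimately show thesis using that by blast
qed

lemma skew_lines_Rmat_subset: "skew_lines_of Rmat \<subseteq> a ` {1..6}"
proof
  fix L assume "L \<in> skew_lines_of Rmat"
  then obtain p s where L: "proj_line L" "L = planes_locus Rmat p" and s: "s \<in> {1, 2, 3}" "p s \<noteq> 0"
    unfolding skew_lines_of_def by blast
  show "L \<in> a ` {1..6}"
  proof (cases "p 1 \<noteq> 0 \<and> p 2 \<noteq> 0 \<and> p 3 \<noteq> 0")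
    case True
    then show ?thesis using planes_locus_all_nonzero L by blast
  next
    case False
    then obtain r where r: "r \<in> {1, 2, 3}" "p r = 0" by auto
    obtain u v where ruv: "{r, u, v} = {1, 2, 3}" "distinct [r, u, v]" using perm3_extend[OF r(1)] .
    have rvu: "{r, v, u} = {1, 2, 3}" "distinct [r, v, u]" using ruv by (auto simp: insert_commute)
    consider "p u \<noteq> 0" "p v \<noteq> 0" | "p u \<noteq> 0" "p v = 0" | "p u = 0" "p v \<noteq> 0" | "p u = 0" "p v = 0"
      by blast
    then show ?thesis
    proof cases
      case 1 then show ?thesis using planes_locus_two_nonzero[of r u v p] ruv r(2) L by simp
    next
      case 2 then show ?thesis using planes_locus_single[of r u v p] ruv r(2) L perm3_range[OF ruv(1)] by simp
    next
      case 3 then show ?thesis using planes_locus_single[of r v u p] rvu r(2) L perm3_range[OF rvu(1)] by simp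
    next
      case 4
      have "s \<in> {r, u, v}" unfolding ruv(1) by (rule s(1))
      then show ?thesis using 4 r(2) s(2) by auto
    qed
  qed
qed

lemma a_in_skew_lines_Rmat:
  assumes "j \<in> {1..6}" shows "a j \<in> skew_lines_of Rmat"
proof -
  have "\<exists>p. (\<exists>s\<in>{1, 2, 3}. p s \<noteq> 0) \<and> a j = planes_locus Rmat p"
  proof (cases "j \<in> {1, 2, 3}")
    case True
    let ?e = "\<lambda>s. if s = j then 1 else 0 :: 'a"
    obtain r t where "{j, r, t} = {1, 2, 3}" "distinct [j, r, t]" using perm3_extend[OF True] .
    then have rjt: "{r, j, t} = {1, 2, 3}" "distinct [r, j, t]" by (auto simp: insert_commute)
    then have "planes_locus Rmat ?e = a j" using planes_locus_single[OF rjt, of ?e] by simp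
    then show ?thesis using True by (intro exI[of _ ?e]) auto
  next
    case False
    with assms obtain p where "p 3 \<noteq> 0" "a j \<subseteq> planes_locus Rmat p" by (rule a_subset_planes_locus)
    then show ?thesis using planes_locus_eq_line[OF proj_line_a[OF assms]] by auto
  qed
  then show ?thesis using proj_line_a[OF assms] unfolding skew_lines_of_def by auto
qed

lemma skew_lines_Rmat: "skew_lines_of Rmat = a ` {1..6}"
proof (rule equalityI[OF skew_lines_Rmat_subset])
  show "a ` {1..6} \<subseteq> skew_lines_of Rmat" by (rule image_subsetI) (rule a_in_skew_lines_Rmat)
qed

end

theorem mainTheorem2:
  fixes c :: "4 \<Rightarrow> 4 \<Rightarrow> 4 \<Rightarrow> 'a::alg_closed_field"
    and a b :: "nat \<Rightarrow> ('a ^ 4) set"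
    and \<pi> :: "nat \<Rightarrow> nat \<Rightarrow> 'a ^ 4"
  assumes smooth: "smooth_cubic c"
    and ds: "double_six c a b"
    and planes: "\<forall>i\<in>{1..6}. \<forall>j\<in>{1..6}. i \<noteq> j \<longrightarrow>
                   \<pi> i j \<noteq> 0 \<and> {x. lform (\<pi> i j) x = 0} = span2 (b i) (a j)"
    and scaling: "\<exists>\<mu>. \<mu> \<noteq> 0 \<and> (\<forall>x.
        lform (\<pi> 1 2) x * lform (\<pi> 2 3) x * lform (\<pi> 3 1) x
      + lform (\<pi> 1 3) x * lform (\<pi> 2 1) x * lform (\<pi> 3 2) x = \<mu> * cubic_eval c x)"
  shows "skew_lines_of (\<lambda>r s. if r = s then 0 else \<pi> r s) = a ` {1..6}
       \<and> skew_lines_of (lmat_transpose (\<lambda>r s. if r = s then 0 else \<pi> r s)) = b ` {1..6}"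
proof -
  obtain \<mu> where "\<mu> \<noteq> 0" and sc: "\<And>x.
        lform (\<pi> 1 2) x * lform (\<pi> 2 3) x * lform (\<pi> 3 1) x
      + lform (\<pi> 1 3) x * lform (\<pi> 2 1) x * lform (\<pi> 3 2) x = \<mu> * cubic_eval c x"
    using scaling by blast
  interpret R: determinantal_double_six c a b \<pi> \<mu>
    using smooth ds planes \<open>\<mu> \<noteq> 0\<close> sc by unfold_locales
  interpret Rt: determinantal_double_six c b a "\<lambda>i j. \<pi> j i" \<mu>
  proof unfold_locales
    show "double_six c b a"
      using ds unfolding double_six_def meets_def by (auto simp: Int_commute)
    show "\<forall>i\<in>{1..6}. \<forall>j\<in>{1..6}. i \<noteq> j \<longrightarrow>
        \<pi> j i \<noteq> 0 \<and> {x. lform (\<pi> j i) x = 0} = span2 (a i) (b j)"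
      using planes by (auto simp: span2_commute)
    show "lform (\<pi> 2 1) x * lform (\<pi> 3 2) x * lform (\<pi> 1 3) x
      + lform (\<pi> 3 1) x * lform (\<pi> 1 2) x * lform (\<pi> 2 3) x = \<mu> * cubic_eval c x" for x
      using sc[of x] by (simp add: ac_simps)
  qed (use smooth \<open>\<mu> \<noteq> 0\<close> in auto)
  have "R.Rmat = (\<lambda>r s. if r = s then 0 else \<pi> r s)"
    and "Rt.Rmat = lmat_transpose (\<lambda>r s. if r = s then 0 else \<pi> r s)"
    by (auto simp: R.Rmat_def Rt.Rmat_def lmat_transpose_def fun_eq_iff)
  then show ?thesis using R.skew_lines_Rmat Rt.skew_lines_Rmat by simp
qed

end
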